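(* Let $\mathbf t=(t_1,t_2,t_3)\in\mathbb N^3$, $k=t_1+t_2+t_3+2$, and let $w\ge k$ be a constant integer. For each $n>w$ let $\mathbf J=(J_1,J_2,J_3)$ be a random vector with \[ \mathbb P(\mathbf J=\mathbf j)=\binom{j_1}{t_1}\binom{j_2}{t_2}\binom{j_3}{t_3}\Big/\binom nk\qquad\text{for }\mathbf j\in\mathbb N^3,\ j_1+j_2+j_3=n-2 . \] Let $(E_n)_{n\ge0}$ and $(T_n)_{n\ge0}$ be sequences of real numbers such that $E_n$, for $n\le w$, are given constants and \[ E_n=T_n+\sum_{j=0}^{n-2}E_j\sum_{r=1}^3\mathbb P(J_r=j)\qquad\text{for }n>w, \] and suppose $T_n=an+O(n^{1-\varepsilon})$ for constants $a$ and $\varepsilon>0$. Then \[ E_n\sim\frac{a}{\mathcal H}\,n\ln n\qquad(n\to\infty), \] where $\mathcal H=\sum_{r=1}^3\frac{t_r+1}{k+1}(H_{k+1}-H_{t_r+1})$ and $H_m=\sum_{i=1}^m 1/i$.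
   Context: In the paper, $E_n$ is the expected cost $\mathbb E[C_n]$ of Generalized Yaroslavskiy Quicksort, $T_n$ the expected partitioning cost $\mathbb E[T_n]$, and the base values for $n\le w$ are expected Insertionsort costs; here these are stated abstractly as numbers. *)

theory Defs
  imports "HOL-Analysis.Analysis" "HOL-Library.Landau_Symbols"
begin

definition J_support :: "nat \<Rightarrow> (nat \<times> nat \<times> nat) set" where
  "J_support n = {(j1, j2, j3). j1 + j2 + j3 = n - 2}"

definition probJ :: "nat \<Rightarrow> nat \<Rightarrow> nat \<Rightarrow> nat \<Rightarrow> nat \<times> nat \<times> nat \<Rightarrow> real" where
  "probJ t1 t2 t3 n j = (case j of (j1, j2, j3) \<Rightarrow>
     if j1 + j2 + j3 = n - 2 then
       real (j1 choose t1) * real (j2 choose t2) * real (j3 choose t3)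
         / real (n choose (t1 + t2 + t3 + 2))
     else 0)"

definition comp3 :: "nat \<Rightarrow> nat \<times> nat \<times> nat \<Rightarrow> nat" where
  "comp3 r j = (case j of (j1, j2, j3) \<Rightarrow> if r = 1 then j1 else if r = 2 then j2 else j3)"

definition probJr :: "nat \<Rightarrow> nat \<Rightarrow> nat \<Rightarrow> nat \<Rightarrow> nat \<Rightarrow> nat \<Rightarrow> real" where
  "probJr t1 t2 t3 n r j = (\<Sum>x\<in>{x\<in>J_support n. comp3 r x = j}. probJ t1 t2 t3 n x)"

definition entropyH :: "nat \<Rightarrow> nat \<Rightarrow> nat \<Rightarrow> real" where
  "entropyH t1 t2 t3 = (let k = t1 + t2 + t3 + 2 in
     (\<Sum>t\<in>#{#t1, t2, t3#}. real (t + 1) / real (k + 1) * (harm (k + 1) - harm (t + 1))))"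

end

theory Submission
  imports Defs "HOL-Real_Asymp.Real_Asymp"
begin

text \<open>The recurrence is linear and monotone in \<open>E\<close>: writing \<open>W f n = E[f J\<^sub>1 + f J\<^sub>2 + f J\<^sub>3]\<close>,
  one has \<open>E n = T n + W E n\<close>. Vandermonde-type convolutions of binomial coefficients, also weighted
  with harmonic numbers, give \<open>W u n = u n\<close> for \<open>u j = j + 1\<close> and
  \<open>W g n = g n - \<H> (n + 1)\<close> for \<open>g j = (j + 1) H\<^sub>j\<^sub>+\<^sub>1\<close>. Hence \<open>c g + C u\<close> pays exactly the toll
  \<open>c \<H> (n + 1)\<close>, and by induction along the recurrence it dominates \<open>E\<close> once
  \<open>T n \<le> c \<H> (n + 1)\<close> eventually and \<open>C\<close> covers the initial values. Applying this to \<open>E\<close> and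
  \<open>-E\<close> with \<open>c = (\<plusminus>a + \<epsilon>\<H>)/\<H>\<close> and using \<open>g n \<sim> n ln n\<close> gives the claim.\<close>

lemma sum_choose_mult_diff_pascal:
  fixes f :: "nat \<Rightarrow> real"
  shows "(\<Sum>i\<le>Suc N. real (i choose a) * real ((Suc N - i) choose Suc b) * f i)
       = (\<Sum>i\<le>N. real (i choose a) * real ((N - i) choose b) * f i)
       + (\<Sum>i\<le>N. real (i choose a) * real ((N - i) choose Suc b) * f i)"
  by (simp add: atMost_Suc Suc_diff_le sum.distrib[symmetric] algebra_simps)

lemma sum_choose_mult_diff:
  "(\<Sum>i\<le>N. real (i choose a) * real ((N - i) choose b)) = real (Suc N choose (a + b + 1))"
proof (induction N arbitrary: b)
  case 0
  then show ?case by (cases a) auto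
next
  case (Suc N)
  show ?case
  proof (cases b)
    case 0
    then show ?thesis using Suc.IH[of 0] by (simp add: atMost_Suc)
  next
    case (Suc b')
    show ?thesis
      using sum_choose_mult_diff_pascal[where f = "\<lambda>_. 1" and N = N and a = a and b = b']
        Suc.IH[of b'] Suc.IH[of b]
      by (simp add: Suc del: binomial_Suc_Suc) simp
  qed
qed

lemma harm_choose_pascal:
  "real (Suc (Suc N) choose Suc c) * (harm (Suc (Suc N)) - harm (Suc c) + harm a)
   = real (Suc N choose c) * (harm (Suc N) - harm c + harm a)
   + real (Suc N choose Suc c) * (harm (Suc N) - harm (Suc c) + harm a)"
proof -
  define P x y where "P = real (Suc (Suc N) choose Suc c)"
    and "x = real (Suc N choose c)" and "y = real (Suc N choose Suc c)"
  define qN qc where "qN = inverse (real (Suc (Suc N)))" and "qc = inverse (real (Suc c))"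
  have pascal: "P = x + y" by (simp add: P_def x_def y_def)
  have absorb: "P * qN = x * qc"
    using Suc_times_binomial_eq[of "Suc N" c]
    by (simp add: P_def x_def qN_def qc_def field_simps del: binomial_Suc_Suc flip: of_nat_mult)
  have "P * (harm (Suc N) + qN - (harm c + qc) + harm a)
      = x * (harm (Suc N) - harm c + harm a) + y * (harm (Suc N) - (harm c + qc) + harm a)"
    using absorb unfolding pascal by algebra
  then show ?thesis by (simp add: harm_Suc P_def x_def y_def qN_def qc_def del: binomial_Suc_Suc)
qed

lemma sum_choose_mult_diff_harm:
  "(\<Sum>i\<le>N. real (i choose a) * real ((N - i) choose b) * harm i)
   = real (Suc N choose (a + b + 1)) * (harm (Suc N) - harm (a + b + 1) + harm a)"
proof (induction N arbitrary: b)
  case 0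
  then show ?case by (cases a; cases b) auto
next
  case (Suc N)
  show ?case
  proof (cases b)
    case 0
    then show ?thesis
      using Suc.IH[of 0] harm_choose_pascal[of N a a] by (simp add: atMost_Suc del: binomial_Suc_Suc)
  next
    case (Suc b')
    show ?thesis
      using sum_choose_mult_diff_pascal[where f = harm and N = N and a = a and b = b']
        Suc.IH[of b'] Suc.IH[of b] harm_choose_pascal[of N "a + b' + 1" a]
      by (simp add: Suc del: binomial_Suc_Suc)
  qed
qed

lemma sum_J_support_fibre:
  fixes g :: "nat \<times> nat \<times> nat \<Rightarrow> real"
  assumes "j + M + 2 = n"
  shows "(\<Sum>x\<in>{x\<in>J_support n. comp3 1 x = j}. g x) = (\<Sum>b\<le>M. g (j, b, M - b))"
    and "(\<Sum>x\<in>{x\<in>J_support n. comp3 2 x = j}. g x) = (\<Sum>b\<le>M. g (b, j, M - b))"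
    and "(\<Sum>x\<in>{x\<in>J_support n. comp3 3 x = j}. g x) = (\<Sum>b\<le>M. g (b, M - b, j))"
proof -
  show "(\<Sum>x\<in>{x\<in>J_support n. comp3 1 x = j}. g x) = (\<Sum>b\<le>M. g (j, b, M - b))"
    by (rule sum.reindex_bij_witness[where i = "\<lambda>b. (j, b, M - b)" and j = "\<lambda>x. fst (snd x)"])
      (use assms in \<open>auto simp: J_support_def comp3_def intro!: arg_cong[where f = g]\<close>)
  show "(\<Sum>x\<in>{x\<in>J_support n. comp3 2 x = j}. g x) = (\<Sum>b\<le>M. g (b, j, M - b))"
    by (rule sum.reindex_bij_witness[where i = "\<lambda>b. (b, j, M - b)" and j = fst])
      (use assms in \<open>auto simp: J_support_def comp3_def intro!: arg_cong[where f = g]\<close>)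
  show "(\<Sum>x\<in>{x\<in>J_support n. comp3 3 x = j}. g x) = (\<Sum>b\<le>M. g (b, M - b, j))"
    by (rule sum.reindex_bij_witness[where i = "\<lambda>b. (b, M - b, j)" and j = fst])
      (use assms in \<open>auto simp: J_support_def comp3_def intro!: arg_cong[where f = g]\<close>)
qed

lemma probJ_J_support:
  assumes "j1 + j2 + j3 + 2 = n"
  shows "probJ t1 t2 t3 n (j1, j2, j3)
     = real (j1 choose t1) * real (j2 choose t2) * real (j3 choose t3) / real (n choose (t1 + t2 + t3 + 2))"
proof -
  have "j1 + j2 + j3 = n - 2" using assms by simp
  then show ?thesis by (simp add: probJ_def)
qed

lemma probJr_eq:
  assumes "j + M + 2 = n"
  shows "probJr t1 t2 t3 n 1 j = real (j choose t1) * real (Suc M choose (t2+t3+1)) / real (n choose (t1+t2+t3+2))"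
    and "probJr t1 t2 t3 n 2 j = real (j choose t2) * real (Suc M choose (t1+t3+1)) / real (n choose (t1+t2+t3+2))"
    and "probJr t1 t2 t3 n 3 j = real (j choose t3) * real (Suc M choose (t1+t2+1)) / real (n choose (t1+t2+t3+2))"
  unfolding probJr_def sum_J_support_fibre[OF assms] sum_choose_mult_diff[symmetric] using assms
  by (simp_all add: probJ_J_support sum_distrib_left sum_divide_distrib mult_ac)

text \<open>\<open>expect_subcalls t1 t2 t3 n f\<close> is \<open>W f n = E[f J\<^sub>1 + f J\<^sub>2 + f J\<^sub>3]\<close>.\<close>

definition expect_subcalls :: "nat \<Rightarrow> nat \<Rightarrow> nat \<Rightarrow> nat \<Rightarrow> (nat \<Rightarrow> real) \<Rightarrow> real" where
  "expect_subcalls t1 t2 t3 n f = (\<Sum>j = 0..n-2. f j * (\<Sum>r\<in>{1,2,3}. probJr t1 t2 t3 n r j))"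

lemma expect_subcalls_eq:
  assumes "n \<ge> 2"
  shows "expect_subcalls t1 t2 t3 n f
    = (\<Sum>t\<in>#{#t1, t2, t3#}. \<Sum>j\<le>n-2. real (j choose t) * real ((n-1-j) choose (t1+t2+t3+1-t)) * f j)
      / real (n choose (t1 + t2 + t3 + 2))"
proof -
  have "(\<Sum>r\<in>{1,2,3}. probJr t1 t2 t3 n r j)
      = (\<Sum>t\<in>#{#t1, t2, t3#}. real (j choose t) * real ((n-1-j) choose (t1+t2+t3+1-t)))
        / real (n choose (t1 + t2 + t3 + 2))" if "j \<le> n - 2" for j
  proof -
    have M: "j + (n - 2 - j) + 2 = n" and M': "Suc (n - 2 - j) = n - 1 - j" using assms that by auto
    have "(\<Sum>r\<in>{1,2,3}. probJr t1 t2 t3 n r j)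
        = probJr t1 t2 t3 n 1 j + probJr t1 t2 t3 n 2 j + probJr t1 t2 t3 n 3 j" by simp
    then show ?thesis
      unfolding probJr_eq[OF M] M' by (simp add: add_divide_distrib add_ac)
  qed
  then show ?thesis
    unfolding expect_subcalls_def atLeast0AtMost
    by (simp add: sum.distrib add_divide_distrib sum_divide_distrib algebra_simps)
qed

lemma sum_choose_shift_absorb:
  fixes f :: "nat \<Rightarrow> real"
  assumes "s \<ge> 1" "n \<ge> 2"
  shows "(\<Sum>j\<le>n-2. real (j choose t) * real ((n-1-j) choose s) * (real (Suc j) * f (Suc j)))
    = real (Suc t) * (\<Sum>i\<le>n. real (i choose Suc t) * real ((n-i) choose s) * f i)"
proof -
  define F where "F i = real (i choose Suc t) * real ((n-i) choose s) * f i" for i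
  obtain m where m: "n = Suc (Suc m)" using assms by (metis add_2_eq_Suc le_Suc_ex)
  have "(\<Sum>i\<le>n. F i) = F 0 + (\<Sum>j\<le>Suc m. F (Suc j))"
    unfolding m by (rule sum.atMost_Suc_shift)
  also have "\<dots> = F 0 + (\<Sum>j\<le>m. F (Suc j)) + F n"
    by (simp add: m)
  also have "\<dots> = (\<Sum>j\<le>n-2. F (Suc j))"
    using assms by (simp add: F_def m)
  finally have shift: "(\<Sum>i\<le>n. F i) = (\<Sum>j\<le>n-2. F (Suc j))" .
  have absorb: "real (Suc j) * real (j choose t) = real (Suc t) * real (Suc j choose Suc t)" for j
    by (simp only: Suc_times_binomial flip: of_nat_mult)
  have "(\<Sum>j\<le>n-2. real (j choose t) * real ((n-1-j) choose s) * (real (Suc j) * f (Suc j)))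
      = (\<Sum>j\<le>n-2. real (Suc t) * F (Suc j))"
    using absorb by (intro sum.cong refl) (simp add: F_def mult_ac del: of_nat_Suc binomial_Suc_Suc)
  also have "\<dots> = real (Suc t) * (\<Sum>i\<le>n. F i)"
    by (simp only: shift sum_distrib_left)
  finally show ?thesis
    by (simp only: F_def)
qed

lemma expect_subcalls_Suc_weighted:
  assumes "n \<ge> 2"
    and "\<And>t. t \<le> t1 + t2 + t3 \<Longrightarrow>
      (\<Sum>i\<le>n. real (i choose Suc t) * real ((n-i) choose (t1+t2+t3+1-t)) * f i) = g t"
  shows "expect_subcalls t1 t2 t3 n (\<lambda>j. real (Suc j) * f (Suc j))
    = (\<Sum>t\<in>#{#t1, t2, t3#}. real (Suc t) * g t) / real (n choose (t1 + t2 + t3 + 2))"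
proof -
  have "(\<Sum>j\<le>n-2. real (j choose t) * real ((n-1-j) choose (t1+t2+t3+1-t)) * (real (Suc j) * f (Suc j)))
      = real (Suc t) * g t" if "t \<in># {#t1, t2, t3#}" for t
  proof -
    have t: "t \<le> t1 + t2 + t3" using that by auto
    then have "1 \<le> t1 + t2 + t3 + 1 - t" by simp
    from sum_choose_shift_absorb[OF this assms(1)] show ?thesis by (simp only: assms(2)[OF t])
  qed
  then show ?thesis
    unfolding expect_subcalls_eq[OF assms(1)] by (simp only: cong: image_mset_cong)
qed

lemma binomial_Suc_Suc_ratio:
  assumes "k \<le> n"
  shows "real (Suc n choose Suc k) / real (n choose k) = real (Suc n) / real (Suc k)"
proof -
  have "real (Suc k) * real (Suc n choose Suc k) = real (Suc n) * real (n choose k)"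
    by (simp only: Suc_times_binomial flip: of_nat_mult)
  moreover have "real (n choose k) > 0" using assms by simp
  ultimately show ?thesis by (simp add: field_simps del: of_nat_Suc binomial_Suc_Suc)
qed

lemma expect_subcalls_Suc:
  assumes "n \<ge> t1 + t2 + t3 + 2"
  shows "expect_subcalls t1 t2 t3 n (\<lambda>j. real (Suc j)) = real (Suc n)"
proof -
  define k where "k = t1 + t2 + t3 + 2"
  define c where "c = real (Suc n choose Suc k)"
  have inner: "(\<Sum>i\<le>n. real (i choose Suc t) * real ((n-i) choose (t1+t2+t3+1-t)) * 1) = c"
    if "t \<le> t1 + t2 + t3" for t
  proof -
    have "Suc t + (t1+t2+t3+1-t) + 1 = Suc k" using that by (simp add: k_def)
    then show ?thesis
      using sum_choose_mult_diff[where N = n and a = "Suc t" and b = "t1+t2+t3+1-t"] by (simp add: c_def)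
  qed
  have "expect_subcalls t1 t2 t3 n (\<lambda>j. real (Suc j) * 1)
      = (\<Sum>t\<in>#{#t1, t2, t3#}. real (Suc t) * c) / real (n choose k)"
    using assms by (intro expect_subcalls_Suc_weighted[OF _ inner, folded k_def]) (auto simp: k_def)
  also have "(\<Sum>t\<in>#{#t1, t2, t3#}. real (Suc t) * c) = real (Suc k) * c"
    by (simp add: k_def algebra_simps)
  also have "real (Suc k) * c / real (n choose k) = real (Suc k) * (c / real (n choose k))"
    by simp
  also have "\<dots> = real (Suc n)"
    using assms by (simp add: c_def binomial_Suc_Suc_ratio k_def del: binomial_Suc_Suc of_nat_Suc)
  finally show ?thesis by simp
qed

lemma entropyH_mult_eq:
  "real (Suc (t1 + t2 + t3 + 2)) * entropyH t1 t2 t3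
    = (\<Sum>t\<in>#{#t1, t2, t3#}. real (Suc t) * (harm (Suc (t1 + t2 + t3 + 2)) - harm (Suc t)))"
  unfolding entropyH_def Let_def sum_mset_distrib_left by (simp add: numeral_3_eq_3)

lemma expect_subcalls_Suc_harm:
  assumes "n \<ge> t1 + t2 + t3 + 2"
  shows "expect_subcalls t1 t2 t3 n (\<lambda>j. real (Suc j) * harm (Suc j))
    = real (Suc n) * (harm (Suc n) - entropyH t1 t2 t3)"
proof -
  define k where "k = t1 + t2 + t3 + 2"
  define c where "c = real (Suc n choose Suc k)"
  have inner: "(\<Sum>i\<le>n. real (i choose Suc t) * real ((n-i) choose (t1+t2+t3+1-t)) * harm i)
      = c * (harm (Suc n) - (harm (Suc k) - harm (Suc t)))"
    if "t \<le> t1 + t2 + t3" for t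
  proof -
    have "Suc t + (t1+t2+t3+1-t) + 1 = Suc k" using that by (simp add: k_def)
    then show ?thesis
      using sum_choose_mult_diff_harm[where N = n and a = "Suc t" and b = "t1+t2+t3+1-t"] by (simp add: c_def)
  qed
  have "expect_subcalls t1 t2 t3 n (\<lambda>j. real (Suc j) * harm (Suc j))
      = (\<Sum>t\<in>#{#t1, t2, t3#}. real (Suc t) * (c * (harm (Suc n) - (harm (Suc k) - harm (Suc t)))))
        / real (n choose k)"
    using assms by (intro expect_subcalls_Suc_weighted[OF _ inner, folded k_def]) (auto simp: k_def)
  also have "(\<Sum>t\<in>#{#t1, t2, t3#}. real (Suc t) * (c * (harm (Suc n) - (harm (Suc k) - harm (Suc t)))))
      = c * (real (Suc k) * harm (Suc n) - (\<Sum>t\<in>#{#t1, t2, t3#}. real (Suc t) * (harm (Suc k) - harm (Suc t))))"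
    by (simp add: k_def algebra_simps)
  also have "\<dots> = c * (real (Suc k) * harm (Suc n) - real (Suc k) * entropyH t1 t2 t3)"
    using entropyH_mult_eq[of t1 t2 t3] by (simp only: k_def)
  also have "c * (real (Suc k) * harm (Suc n) - real (Suc k) * entropyH t1 t2 t3) / real (n choose k)
      = c / real (n choose k) * real (Suc k) * (harm (Suc n) - entropyH t1 t2 t3)"
    by (simp add: algebra_simps)
  also have "\<dots> = real (Suc n) * (harm (Suc n) - entropyH t1 t2 t3)"
    using assms unfolding c_def k_def by (simp add: binomial_Suc_Suc_ratio del: binomial_Suc_Suc of_nat_Suc)
  finally show ?thesis .
qed

lemma expect_subcalls_lincomb:
  "expect_subcalls t1 t2 t3 n (\<lambda>j. c * X j + d * Y j)
    = c * expect_subcalls t1 t2 t3 n X + d * expect_subcalls t1 t2 t3 n Y"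
  unfolding expect_subcalls_def by (simp add: algebra_simps sum.distrib sum_distrib_left)

lemma expect_subcalls_uminus:
  "expect_subcalls t1 t2 t3 n (\<lambda>j. - X j) = - expect_subcalls t1 t2 t3 n X"
  unfolding expect_subcalls_def by (simp add: sum_negf)

lemma expect_subcalls_mono:
  assumes "\<And>j. j \<le> n - 2 \<Longrightarrow> X j \<le> Y j"
  shows "expect_subcalls t1 t2 t3 n X \<le> expect_subcalls t1 t2 t3 n Y"
proof -
  have "probJr t1 t2 t3 n r j \<ge> 0" for r j
    unfolding probJr_def probJ_def by (auto intro!: sum_nonneg split: prod.splits)
  then show ?thesis
    unfolding expect_subcalls_def using assms by (intro sum_mono mult_right_mono sum_nonneg) auto
qed

lemma expect_subcalls_comparison:
  assumes "\<And>n. n \<le> N \<Longrightarrow> X n \<le> Y n"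
    and "\<And>n. n > N \<Longrightarrow> X n - expect_subcalls t1 t2 t3 n X \<le> Y n - expect_subcalls t1 t2 t3 n Y"
  shows "X n \<le> Y n"
proof (induction n rule: less_induct)
  case (less n)
  show ?case
  proof (cases "n \<le> N")
    case False
    then have "expect_subcalls t1 t2 t3 n X \<le> expect_subcalls t1 t2 t3 n Y"
      using less by (intro expect_subcalls_mono) auto
    with False show ?thesis using assms(2)[of n] by simp
  qed (use assms(1) in simp)
qed

lemma entropyH_pos: "entropyH t1 t2 t3 > 0"
proof -
  have "harm (Suc t) < (harm (Suc (t1 + t2 + t3 + 2)) :: real)" if "t \<le> t1 + t2 + t3" for t
  proof -
    have "harm (Suc t) \<le> (harm (t1 + t2 + t3 + 2) :: real)" using that by (intro harm_mono) simp
    also have "\<dots> < harm (Suc (t1 + t2 + t3 + 2))" by (simp add: harm_Suc)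
    finally show ?thesis .
  qed
  then have "0 < (\<Sum>t\<in>#{#t1, t2, t3#}. real (Suc t) * (harm (Suc (t1 + t2 + t3 + 2)) - harm (Suc t)))"
    by (simp add: add_pos_pos del: of_nat_Suc harm_Suc)
  then show ?thesis
    unfolding entropyH_mult_eq[symmetric] by (simp add: zero_less_mult_iff)
qed

lemma expect_subcalls_toll:
  assumes "n \<ge> t1 + t2 + t3 + 2"
  shows "c * (real (Suc n) * harm (Suc n)) + C * real (Suc n)
      - expect_subcalls t1 t2 t3 n (\<lambda>j. c * (real (Suc j) * harm (Suc j)) + C * real (Suc j))
    = c * entropyH t1 t2 t3 * real (Suc n)"
  unfolding expect_subcalls_lincomb expect_subcalls_Suc[OF assms] expect_subcalls_Suc_harm[OF assms]
  by (simp add: algebra_simps)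

lemma recurrence_upper_bound:
  fixes E T :: "nat \<Rightarrow> real"
  assumes hw: "w \<ge> t1 + t2 + t3 + 2"
    and rec: "\<And>n. n > w \<Longrightarrow> E n = T n + expect_subcalls t1 t2 t3 n E"
    and hT: "eventually (\<lambda>n. T n \<le> b * real (Suc n)) sequentially"
  shows "\<exists>C. \<forall>n. E n \<le> b / entropyH t1 t2 t3 * (real (Suc n) * harm (Suc n)) + C * real (Suc n)"
proof -
  define c where "c = b / entropyH t1 t2 t3"
  define g where "g j = c * (real (Suc j) * harm (Suc j))" for j
  have "eventually (\<lambda>n. w \<le> n \<and> T n \<le> b * real (Suc n)) sequentially"
    using hT by (intro eventually_conj eventually_ge_at_top)
  then obtain N where TN: "\<And>n. n \<ge> N \<Longrightarrow> w \<le> n \<and> T n \<le> b * real (Suc n)"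
    unfolding eventually_sequentially by blast
  then have N: "N \<ge> w" by blast
  define C where "C = (\<Sum>m\<le>N. \<bar>E m - g m\<bar>)"
  have "E n \<le> g n + C * real (Suc n)" for n
  proof (rule expect_subcalls_comparison[where N = N and X = E and Y = "\<lambda>n. g n + C * real (Suc n)"])
    fix n assume "n \<le> N"
    then have "E n - g n \<le> C"
      unfolding C_def using member_le_sum[of n "{..N}" "\<lambda>m. \<bar>E m - g m\<bar>"] by auto
    moreover have "C * 1 \<le> C * real (Suc n)"
      unfolding C_def by (intro mult_left_mono sum_nonneg) auto
    ultimately show "E n \<le> g n + C * real (Suc n)" by simp
  next
    fix n assume "n > N"
    then have "E n - expect_subcalls t1 t2 t3 n E \<le> b * real (Suc n)"
      using rec TN N by fastforce
    also have "\<dots> = c * entropyH t1 t2 t3 * real (Suc n)"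
      using entropyH_pos[of t1 t2 t3] by (simp add: c_def)
    also have "\<dots> = g n + C * real (Suc n) - expect_subcalls t1 t2 t3 n (\<lambda>j. g j + C * real (Suc j))"
      unfolding g_def using \<open>n > N\<close> N hw by (intro expect_subcalls_toll[symmetric]) simp
    finally show "E n - expect_subcalls t1 t2 t3 n E
        \<le> g n + C * real (Suc n) - expect_subcalls t1 t2 t3 n (\<lambda>j. g j + C * real (Suc j))" .
  qed
  then show ?thesis unfolding g_def c_def by blast
qed

lemma recurrence_two_sided_bound:
  fixes E T :: "nat \<Rightarrow> real"
  assumes hw: "w \<ge> t1 + t2 + t3 + 2"
    and rec: "\<And>n. n > w \<Longrightarrow> E n = T n + expect_subcalls t1 t2 t3 n E"
    and hT: "(\<lambda>n. T n - a * real (Suc n)) \<in> o(\<lambda>n. real n)"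
    and e: "e > 0"
  shows "\<exists>C. \<forall>n. \<bar>E n - a / entropyH t1 t2 t3 * (real (Suc n) * harm (Suc n))\<bar>
      \<le> e * (real (Suc n) * harm (Suc n)) + C * real (Suc n)"
proof -
  define H where "H = entropyH t1 t2 t3"
  have H: "H > 0" unfolding H_def by (rule entropyH_pos)
  have "eventually (\<lambda>n. \<bar>T n - a * real (Suc n)\<bar> \<le> e * H * real (Suc n)) sequentially"
    using landau_o.smallD[OF hT mult_pos_pos[OF e H]]
  proof eventually_elim
    case (elim n)
    have "e * H * real n \<le> e * H * real (Suc n)" using e H by simp
    then show ?case using elim by simp
  qed
  then have upper: "eventually (\<lambda>n. T n \<le> (a + e * H) * real (Suc n)) sequentially"
    and lower: "eventually (\<lambda>n. - T n \<le> (- a + e * H) * real (Suc n)) sequentially"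
    by (eventually_elim, simp add: abs_le_iff algebra_simps)+
  obtain C1 where C1: "\<And>n. E n \<le> (a + e * H) / H * (real (Suc n) * harm (Suc n)) + C1 * real (Suc n)"
    using recurrence_upper_bound[OF hw rec upper] unfolding H_def by blast
  have rec_neg: "- E n = - T n + expect_subcalls t1 t2 t3 n (\<lambda>j. - E j)" if "n > w" for n
    using rec[OF that] by (simp add: expect_subcalls_uminus)
  obtain C2 where C2: "\<And>n. - E n \<le> (- a + e * H) / H * (real (Suc n) * harm (Suc n)) + C2 * real (Suc n)"
    using recurrence_upper_bound[OF hw rec_neg lower] unfolding H_def by blast
  have "\<bar>E n - a / H * (real (Suc n) * harm (Suc n))\<bar>
      \<le> e * (real (Suc n) * harm (Suc n)) + max C1 C2 * real (Suc n)" for n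
  proof -
    define G where "G = real (Suc n) * harm (Suc n)"
    have "(a + e * H) / H * G = a / H * G + e * G" "(- a + e * H) / H * G = - (a / H * G) + e * G"
      using H by (simp_all add: field_simps)
    then have up: "E n \<le> a / H * G + e * G + C1 * real (Suc n)"
      and low: "- E n \<le> - (a / H * G) + e * G + C2 * real (Suc n)"
      using C1[of n] C2[of n] by (simp_all add: G_def)
    have max1: "C1 * real (Suc n) \<le> max C1 C2 * real (Suc n)"
      and max2: "C2 * real (Suc n) \<le> max C1 C2 * real (Suc n)"
      by (simp_all add: mult_right_mono)
    have "E n - a / H * G \<le> e * G + max C1 C2 * real (Suc n)" using up max1 by linarith
    moreover have "- (E n - a / H * G) \<le> e * G + max C1 C2 * real (Suc n)" using low max2 by linarith
    ultimately have "\<bar>E n - a / H * G\<bar> \<le> e * G + max C1 C2 * real (Suc n)"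
      by (simp only: abs_le_iff)
    then show ?thesis by (simp only: G_def)
  qed
  then show ?thesis unfolding H_def by blast
qed

lemma smallo_by_uniform_bounds:
  fixes X g u h :: "'a \<Rightarrow> real"
  assumes g: "g \<in> O[F](h)" and u: "u \<in> o[F](h)"
    and bound: "\<And>e. e > 0 \<Longrightarrow> \<exists>C. \<forall>x. \<bar>X x\<bar> \<le> e * \<bar>g x\<bar> + C * \<bar>u x\<bar>"
  shows "X \<in> o[F](h)"
proof (rule landau_o.smallI)
  fix c :: real assume c: "c > 0"
  obtain K where K: "K > 0" "eventually (\<lambda>x. \<bar>g x\<bar> \<le> K * \<bar>h x\<bar>) F"
    using g by (auto elim: landau_o.bigE)
  obtain C where C: "\<And>x. \<bar>X x\<bar> \<le> c / (2 * K) * \<bar>g x\<bar> + C * \<bar>u x\<bar>"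
    using bound[of "c / (2 * K)"] c K by auto
  have "eventually (\<lambda>x. \<bar>u x\<bar> \<le> c / (2 * (\<bar>C\<bar> + 1)) * \<bar>h x\<bar>) F"
    using landau_o.smallD[OF u, of "c / (2 * (\<bar>C\<bar> + 1))"] c by simp
  with K(2) show "eventually (\<lambda>x. norm (X x) \<le> c * norm (h x)) F"
  proof eventually_elim
    case (elim x)
    have "c / (2 * K) * \<bar>g x\<bar> \<le> c / 2 * \<bar>h x\<bar>"
      using mult_left_mono[OF elim(1), of "c / (2 * K)"] c K by simp
    moreover have "C * \<bar>u x\<bar> \<le> c / 2 * \<bar>h x\<bar>"
    proof -
      have "C * \<bar>u x\<bar> \<le> (\<bar>C\<bar> + 1) * \<bar>u x\<bar>" by (simp add: mult_right_mono)
      also have "\<dots> \<le> (\<bar>C\<bar> + 1) * (c / (2 * (\<bar>C\<bar> + 1)) * \<bar>h x\<bar>)"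
        using elim(2) by (intro mult_left_mono) auto
      also have "\<dots> = c / 2 * \<bar>h x\<bar>"
        by (simp add: field_simps add_pos_nonneg)
      finally show ?thesis .
    qed
    ultimately show ?case using C[of x] by simp
  qed
qed

lemma nharm_asymp:
  "(\<lambda>n. real (Suc n) * harm (Suc n) - real n * ln (real n)) \<in> o(\<lambda>n. real n * ln (real n))"
proof -
  define U where "U n = (real n + 1) * (ln (real n + 1) + 1) - real n * ln (real n)" for n
  have "eventually (\<lambda>n. norm (real (Suc n) * harm (Suc n) - real n * ln (real n)) \<le> 1 * norm (U n))
      sequentially"
    using eventually_ge_at_top[of "1::nat"]
  proof eventually_elim
    case (elim n)
    have "ln (real n) \<le> ln (real (Suc n) + 1)" using elim by simp
    also have "\<dots> \<le> harm (Suc n)" by (rule harm_ge_ln)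
    finally have "real n * ln (real n) \<le> real (Suc n) * harm (Suc n)"
      using elim by (intro mult_mono) auto
    moreover have "harm (Suc n) - ln (real (Suc n)) \<le> harm 1 - ln (real (1::nat))"
      by (rule euler_mascheroni_sequence_decreasing) auto
    then have "harm (Suc n) \<le> ln (real n + 1) + 1"
      by (simp add: harm_def add_ac)
    then have "real (Suc n) * harm (Suc n) \<le> (real n + 1) * (ln (real n + 1) + 1)"
      by (simp add: mult_left_mono add.commute[of 1])
    ultimately show ?case by (simp add: U_def)
  qed
  then have "(\<lambda>n. real (Suc n) * harm (Suc n) - real n * ln (real n)) \<in> O(U)"
    by (intro bigoI)
  moreover have "U \<in> o(\<lambda>n. real n * ln (real n))"
    unfolding U_def by real_asymp
  ultimately show ?thesis by (rule landau_o.big_small_trans)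
qed

lemma recurrence_asymp:
  fixes E T :: "nat \<Rightarrow> real"
  assumes hw: "w \<ge> t1 + t2 + t3 + 2"
    and rec: "\<And>n. n > w \<Longrightarrow> E n = T n + expect_subcalls t1 t2 t3 n E"
    and hT: "(\<lambda>n. T n - a * real (Suc n)) \<in> o(\<lambda>n. real n)"
  shows "(\<lambda>n. E n - a / entropyH t1 t2 t3 * real n * ln (real n)) \<in> o(\<lambda>n. real n * ln (real n))"
proof -
  define H where "H = entropyH t1 t2 t3"
  define g where "g n = real (Suc n) * harm (Suc n)" for n
  have g_asymp: "(\<lambda>n. g n - real n * ln (real n)) \<in> o(\<lambda>n. real n * ln (real n))"
    unfolding g_def by (rule nharm_asymp)
  have "(\<lambda>n. E n - a / H * g n) \<in> o(\<lambda>n. real n * ln (real n))"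
  proof (rule smallo_by_uniform_bounds)
    show "g \<in> O(\<lambda>n. real n * ln (real n))"
      using sum_in_bigo(1)[OF landau_o.small_imp_big[OF g_asymp] bigthetaD1[OF bigtheta_refl]] by simp
    show "(\<lambda>n. real (Suc n)) \<in> o(\<lambda>n. real n * ln (real n))" by real_asymp
    show "\<exists>C. \<forall>n. \<bar>E n - a / H * g n\<bar> \<le> e * \<bar>g n\<bar> + C * \<bar>real (Suc n)\<bar>" if "e > 0" for e
      using recurrence_two_sided_bound[OF hw rec hT that] by (simp add: g_def H_def abs_mult)
  qed
  moreover have "(\<lambda>n. a / H * (g n - real n * ln (real n))) \<in> o(\<lambda>n. real n * ln (real n))"
    by (rule cmult_in_smallo_iff[THEN iffD2]) (use g_asymp in blast)
  ultimately have "(\<lambda>n. (E n - a / H * g n) + a / H * (g n - real n * ln (real n)))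
      \<in> o(\<lambda>n. real n * ln (real n))"
    by (rule sum_in_smallo(1))
  moreover have "(\<lambda>n. (E n - a / H * g n) + a / H * (g n - real n * ln (real n)))
      = (\<lambda>n. E n - a / H * real n * ln (real n))"
    by (simp add: algebra_simps)
  ultimately show ?thesis unfolding H_def by simp
qed

theorem theorem6p2:
  fixes t1 t2 t3 w :: nat and E T :: "nat \<Rightarrow> real" and a \<epsilon> :: real
  assumes hw: "w \<ge> t1 + t2 + t3 + 2"
    and rec: "\<And>n. n > w \<Longrightarrow>
      E n = T n + (\<Sum>j = 0..n-2. E j * (\<Sum>r\<in>{1,2,3}. probJr t1 t2 t3 n r j))"
    and heps: "\<epsilon> > 0"
    and hT: "(\<lambda>n. T n - a * real n) \<in> O(\<lambda>n. real n powr (1 - \<epsilon>))"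
  shows "(\<lambda>n. E n - a / entropyH t1 t2 t3 * real n * ln (real n))
           \<in> o(\<lambda>n. real n * ln (real n))"
proof (rule recurrence_asymp[OF hw])
  show "E n = T n + expect_subcalls t1 t2 t3 n E" if "n > w" for n
    using rec[OF that] unfolding expect_subcalls_def .
  have T_linear: "(\<lambda>n. T n - a * real n) \<in> o(\<lambda>n. real n)"
    using hT by (rule landau_o.big_small_trans) (use heps in real_asymp)
  have "(\<lambda>_. a) \<in> o(\<lambda>n. real n)" by real_asymp
  from sum_in_smallo(2)[OF T_linear this]
  show "(\<lambda>n. T n - a * real (Suc n)) \<in> o(\<lambda>n. real n)"
    by (simp add: algebra_simps)
qed

end
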